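(* There is an absolute constant $\alpha>0$ (independent of $n,c,\Delta,V$) such that the following holds. Let $c>4$, $\Delta>0$, $n\ge 2$, and let $V$ be a real $d\times n$ matrix with columns $\vec v_1,\dots,\vec v_n\in\mathbb{R}^d$. Let $S=\{i\in[n]: \mathbf{E}[D_i]\le c\}$ be the set of vertices of expected degree at most $c$ in $G\sim\mathcal{G}_V$. Suppose the expected number of triangles of $G\sim\mathcal{G}_V$ all three of whose vertices lie in $S$ is at least $\Delta n$. Then $$\mathrm{rank}(V)\ \ge\ \alpha\,\frac{\Delta^4}{c^9}\cdot\frac{n}{\lg^2 n}.$$ (The paper phrases this as $\mathrm{rank}(V)\ge \min(1,\mathrm{poly}(\Delta/c))\, n/\lg^2 n$.)
   Context: For vectors $\vec v_1,\dots,\vec v_n\in\mathbb{R}^d$ (columns of a matrix $V$), $\mathcal{G}_V$ is the distribution on simple undirected graphs with vertex set $[n]$ in which, independently for each unordered pair $\{i,j\}$ with $i\neq j$, the edge $(i,j)$ is present with probability $p_{ij}=\max(0,\min(\vec v_i\cdot\vec v_j,1))$. $D_i$ denotes the (random) degree of vertex $i$, so $\mathbf{E}[D_i]=\sum_{j\ne i}p_{ij}$. A triangle is a set of three distinct vertices that are pairwise adjacent. $\lg$ denotes the base-2 logarithm. *)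

theory Defs
  imports "HOL-Probability.Probability" "Jordan_Normal_Form.DL_Rank"
begin

text \<open>Columns of V (a real d x n matrix, Jordan_Normal_Form type real mat) are
  indexed 0..n-1. Edges are unordered pairs {i,j} with i \<noteq> j.\<close>

definition edge_prob :: "real mat \<Rightarrow> nat \<Rightarrow> nat \<Rightarrow> real" where
  "edge_prob V i j = max 0 (min (col V i \<bullet> col V j) 1)"

definition vertex_pairs :: "nat \<Rightarrow> nat set set" where
  "vertex_pairs n = {e. \<exists>i<n. \<exists>j<n. i \<noteq> j \<and> e = {i, j}}"

definition graph_pmf :: "real mat \<Rightarrow> nat set set pmf" where
  "graph_pmf V =
     map_pmf (\<lambda>b. {e \<in> vertex_pairs (dim_col V). b e})
       (Pi_pmf (vertex_pairs (dim_col V)) False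
          (\<lambda>e. bernoulli_pmf (edge_prob V (Min e) (Max e))))"

definition degree :: "nat set set \<Rightarrow> nat \<Rightarrow> nat" where
  "degree E i = card {j. {i, j} \<in> E \<and> j \<noteq> i}"

definition expected_degree :: "real mat \<Rightarrow> nat \<Rightarrow> real" where
  "expected_degree V i = measure_pmf.expectation (graph_pmf V) (\<lambda>E. real (degree E i))"

definition triangles_in :: "nat set set \<Rightarrow> nat set \<Rightarrow> nat set set" where
  "triangles_in E S = {T. T \<subseteq> S \<and> card T = 3 \<and> (\<forall>i\<in>T. \<forall>j\<in>T. i \<noteq> j \<longrightarrow> {i, j} \<in> E)}"

definition low_degree_set :: "real mat \<Rightarrow> real \<Rightarrow> nat set" where
  "low_degree_set V c = {i. i < dim_col V \<and> expected_degree V i \<le> c}"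

end

theory Submission
  imports Defs
begin

text \<open>Write the Gram matrix of the columns as \<open>v\<^sub>i \<bullet> v\<^sub>j = y\<^sub>i \<bullet> y\<^sub>j\<close> with \<open>y\<^sub>i \<in> \<real>\<^sup>r\<close> and
  \<open>r \<le> rank V\<close>, by expanding the columns in an orthonormal basis of the column space.
  Put \<open>t = \<Delta> / (2c\<^sup>2)\<close>. By Cauchy-Schwarz, two low-degree vertices with \<open>|y\<^sub>i|\<^sup>2 < t\<close> are
  joined with probability at most \<open>t\<close>, so triangles containing two such vertices contribute
  at most \<open>t n c\<^sup>2 = \<Delta> n / 2\<close>; every other triangle has a heavy vertex \<open>|y\<^sub>i|\<^sup>2 \<ge> t\<close>, and
  since a vertex of expected degree \<open>\<le> c\<close> spans at most \<open>c\<^sup>2\<close> expected pairs of neighbours,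
  the heavy set \<open>R\<close> has \<open>|R| \<ge> \<Delta> n / (4 c\<^sup>2)\<close>. For the unit vectors \<open>z\<^sub>i = y\<^sub>i / |y\<^sub>i|\<close>,
  \<open>i \<in> R\<close>, the trace inequality gives \<open>|R|\<^sup>2 \<le> r \<Sum> (z\<^sub>i \<bullet> z\<^sub>j)\<^sup>2\<close>, while
  \<open>\<Sum> (z\<^sub>i \<bullet> z\<^sub>j)\<^sup>2 \<le> 2 \<Sum> max 0 (z\<^sub>i \<bullet> z\<^sub>j)\<close> (the matrix is positive semidefinite with entries
  in \<open>[-1, 1]\<close>) and \<open>max 0 (z\<^sub>i \<bullet> z\<^sub>j) \<le> p\<^sub>i\<^sub>j / t\<close> off the diagonal. Hence \<open>|R| t \<le> 4 r c\<close>
  and \<open>\<Delta>\<^sup>2 n \<le> 32 c\<^sup>5 rank V\<close>, stronger than the claimed bound.\<close>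

section \<open>Orthonormal expansions and the rank\<close>

definition dot_upto :: "nat \<Rightarrow> (nat \<Rightarrow> real) \<Rightarrow> (nat \<Rightarrow> real) \<Rightarrow> real" where
  "dot_upto d x y = (\<Sum>l<d. x l * y l)"

definition orthonormal_upto :: "nat \<Rightarrow> (nat \<Rightarrow> real) list \<Rightarrow> bool" where
  "orthonormal_upto d es \<longleftrightarrow>
     (\<forall>k<length es. \<forall>l<length es. dot_upto d (es!k) (es!l) = of_bool (k = l))"

text \<open>For an orthonormal \<open>es\<close>, \<open>parseval d es b\<close> says that \<open>b\<close> lies in the span of \<open>es\<close>.\<close>

definition parseval :: "nat \<Rightarrow> (nat \<Rightarrow> real) list \<Rightarrow> (nat \<Rightarrow> real) \<Rightarrow> bool" where
  "parseval d es b \<longleftrightarrow>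
     (\<forall>z. dot_upto d b z = (\<Sum>k<length es. dot_upto d b (es!k) * dot_upto d z (es!k)))"

lemma dot_upto_commute: "dot_upto d x y = dot_upto d y x"
  unfolding dot_upto_def by (simp add: mult.commute)

lemma dot_upto_self_nonneg: "0 \<le> dot_upto d x x"
  unfolding dot_upto_def by (intro sum_nonneg) simp

lemma dot_upto_eq_0_if_self_eq_0: "dot_upto d x x = 0 \<Longrightarrow> dot_upto d x z = 0"
  unfolding dot_upto_def by (subst (asm) sum_nonneg_eq_0_iff) auto

lemma dot_upto_divide: "dot_upto d (\<lambda>l. x l / s) z = dot_upto d x z / s"
  unfolding dot_upto_def by (simp add: sum_divide_distrib)

lemma dot_upto_minus_combination:
  "dot_upto d (\<lambda>l. b l - (\<Sum>k<m. a k * e k l)) z = dot_upto d b z - (\<Sum>k<m. a k * dot_upto d (e k) z)"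
proof -
  have "dot_upto d (\<lambda>l. b l - (\<Sum>k<m. a k * e k l)) z
      = dot_upto d b z - (\<Sum>l<d. (\<Sum>k<m. a k * e k l) * z l)"
    unfolding dot_upto_def by (simp add: left_diff_distrib sum_subtractf)
  also have "(\<Sum>l<d. (\<Sum>k<m. a k * e k l) * z l) = (\<Sum>k<m. a k * dot_upto d (e k) z)"
    unfolding dot_upto_def sum_distrib_right sum_distrib_left by (subst sum.swap) (simp add: mult_ac)
  finally show ?thesis .
qed

lemma parseval_append_orthogonal:
  assumes b: "parseval d es b" and e: "\<forall>k<length es. dot_upto d e (es!k) = 0"
  shows "parseval d (es @ [e]) b"
  unfolding parseval_def
proof
  fix z
  have b_expand: "dot_upto d b y = (\<Sum>k<length es. dot_upto d b (es!k) * dot_upto d y (es!k))" for y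
    using b unfolding parseval_def by blast
  have "(\<Sum>k<length es. dot_upto d b (es!k) * dot_upto d e (es!k)) = 0"
    using e by (intro sum.neutral) simp
  then have "dot_upto d b e = 0"
    using b_expand[of e] by simp
  then show "dot_upto d b z = (\<Sum>k<length (es @ [e]). dot_upto d b ((es @ [e])!k) * dot_upto d z ((es @ [e])!k))"
    using b_expand[of z] by (simp add: nth_append)
qed

lemma orthonormal_append_normalized:
  assumes on: "orthonormal_upto d es"
    and p_es: "\<And>k. k < length es \<Longrightarrow> dot_upto d p (es!k) = 0" and "dot_upto d p p \<noteq> 0"
  defines "e \<equiv> \<lambda>l. p l / sqrt (dot_upto d p p)"
  shows "orthonormal_upto d (es @ [e])"
proof -
  define s where "s = sqrt (dot_upto d p p)"
  have s: "s > 0" "s * s = dot_upto d p p"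
    using \<open>dot_upto d p p \<noteq> 0\<close> dot_upto_self_nonneg[of d p] unfolding s_def
    by (simp_all add: order_neq_le_trans)
  have de: "dot_upto d e z = dot_upto d p z / s" for z
    unfolding e_def s_def by (rule dot_upto_divide)
  have e_es: "dot_upto d e (es!k) = 0" if "k < length es" for k
    using de p_es that by simp
  have "dot_upto d p e = s"
    using de[of p] dot_upto_commute[of d e p] s(1) by (simp add: s(2)[symmetric])
  then have ee: "dot_upto d e e = 1"
    using de[of e] s by simp
  show ?thesis
    unfolding orthonormal_upto_def
  proof (intro allI impI)
    fix k l assume "k < length (es @ [e])" "l < length (es @ [e])"
    then have k: "k < length es \<or> k = length es" and l: "l < length es \<or> l = length es"
      by auto
    have nth: "(es @ [e])!i = (if i < length es then es!i else e)" if "i < length es \<or> i = length es" for i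
      using that by (auto simp: nth_append)
    show "dot_upto d ((es @ [e])!k) ((es @ [e])!l) = of_bool (k = l)"
      using k l on ee e_es dot_upto_commute[of d e "es!k"] unfolding nth[OF k] nth[OF l]
      unfolding orthonormal_upto_def by auto
  qed
qed

text \<open>One Gram-Schmidt step: \<open>b\<close> minus its projection onto \<open>es\<close> is either zero or, normalised,
  extends \<open>es\<close>.\<close>

lemma gram_schmidt_step:
  assumes on: "orthonormal_upto d es"
  shows "\<exists>es'. length es' \<le> Suc (length es) \<and> orthonormal_upto d es' \<and> parseval d es' b \<and>
           (\<forall>b'. parseval d es b' \<longrightarrow> parseval d es' b')"
proof -
  define m where "m = length es"
  define p where "p l = b l - (\<Sum>k<m. dot_upto d b (es!k) * (es!k) l)" for l
  have dp: "dot_upto d p z = dot_upto d b z - (\<Sum>k<m. dot_upto d b (es!k) * dot_upto d (es!k) z)" for z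
    unfolding p_def by (rule dot_upto_minus_combination)
  have dp_es: "dot_upto d p (es!j) = 0" if "j < m" for j
  proof -
    have "(\<Sum>k<m. dot_upto d b (es!k) * dot_upto d (es!k) (es!j))
        = (\<Sum>k<m. if k = j then dot_upto d b (es!k) else 0)"
      using on that unfolding orthonormal_upto_def m_def by (intro sum.cong) auto
    with dp that show ?thesis by simp
  qed
  show ?thesis
  proof (cases "dot_upto d p p = 0")
    case True
    have "dot_upto d b z = (\<Sum>k<m. dot_upto d b (es!k) * dot_upto d z (es!k))" for z
      using dp[of z] dot_upto_eq_0_if_self_eq_0[OF True, of z]
      by (simp add: dot_upto_commute[of d "es!_" z])
    then have "parseval d es b" unfolding parseval_def m_def by blast
    with on show ?thesis by (intro exI[of _ es]) auto
  next
    case False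
    define s where "s = sqrt (dot_upto d p p)"
    define e where "e l = p l / s" for l
    have "s > 0" using False dot_upto_self_nonneg[of d p] unfolding s_def by simp
    have on': "orthonormal_upto d (es @ [e])"
      using orthonormal_append_normalized[OF on _ False] dp_es unfolding e_def s_def m_def by blast
    have e_es: "dot_upto d e (es!k) = 0" "dot_upto d (es!k) e = 0" if "k < m" for k
      using on'[unfolded orthonormal_upto_def, rule_format, of k m]
        on'[unfolded orthonormal_upto_def, rule_format, of m k] that
      by (simp_all add: nth_append m_def)
    have p_eq: "dot_upto d p z = s * dot_upto d z e" for z
      using dot_upto_divide[of d p s z] dot_upto_commute[of d e z] \<open>s > 0\<close>
      unfolding e_def[abs_def] by simp
    have "dot_upto d e e = 1"
      using on'[unfolded orthonormal_upto_def, rule_format, of m m] by (simp add: nth_append m_def)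
    then have be: "dot_upto d b e = s"
      using dp[of e] e_es(2) p_eq[of e] by simp
    have len: "length (es @ [e]) = Suc m" unfolding m_def by simp
    have "dot_upto d b z = (\<Sum>k<Suc m. dot_upto d b ((es @ [e])!k) * dot_upto d z ((es @ [e])!k))" for z
    proof -
      have "(\<Sum>k<m. dot_upto d b (es!k) * dot_upto d (es!k) z)
          = (\<Sum>k<m. dot_upto d b ((es @ [e])!k) * dot_upto d z ((es @ [e])!k))"
        by (intro sum.cong) (auto simp: nth_append m_def dot_upto_commute[of d _ z])
      then show ?thesis using dp[of z] p_eq[of z] be by (simp add: nth_append m_def)
    qed
    then have "parseval d (es @ [e]) b" unfolding parseval_def len by blast
    moreover have "parseval d (es @ [e]) b'" if "parseval d es b'" for b'
      using e_es unfolding m_def by (intro parseval_append_orthogonal[OF that]) blast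
    ultimately show ?thesis
      using on' len unfolding m_def by (intro exI[of _ "es @ [e]"]) simp
  qed
qed

lemma orthonormal_expansion_exists:
  "\<exists>es. length es \<le> length bs \<and> orthonormal_upto d es \<and> (\<forall>b\<in>set bs. parseval d es b)"
proof (induction bs)
  case Nil
  show ?case by (intro exI[of _ "[]"]) (simp add: orthonormal_upto_def)
next
  case (Cons b bs)
  then obtain es where "length es \<le> length bs" "orthonormal_upto d es" "\<forall>b\<in>set bs. parseval d es b"
    by blast
  moreover obtain es' where "length es' \<le> Suc (length es)" "orthonormal_upto d es'"
    "parseval d es' b" "\<forall>b'. parseval d es b' \<longrightarrow> parseval d es' b'"
    using gram_schmidt_step[OF \<open>orthonormal_upto d es\<close>] by blast
  ultimately show ?case by (intro exI[of _ es']) auto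
qed

lemma parseval_lincomb:
  assumes "finite A" and f: "\<forall>x\<in>A. parseval d es (f x)"
    and w: "\<forall>l<d. w l = (\<Sum>x\<in>A. a x * f x l)"
  shows "parseval d es w"
proof -
  have lin: "dot_upto d w u = (\<Sum>x\<in>A. a x * dot_upto d (f x) u)" for u
  proof -
    have "dot_upto d w u = (\<Sum>l<d. \<Sum>x\<in>A. a x * (f x l * u l))"
      unfolding dot_upto_def using w by (intro sum.cong) (auto simp: sum_distrib_right mult.assoc)
    also have "\<dots> = (\<Sum>x\<in>A. a x * dot_upto d (f x) u)"
      unfolding dot_upto_def by (subst sum.swap) (simp add: sum_distrib_left)
    finally show ?thesis .
  qed
  have "dot_upto d w z = (\<Sum>k<length es. dot_upto d w (es!k) * dot_upto d z (es!k))" for z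
  proof -
    have fx: "dot_upto d (f x) z = (\<Sum>k<length es. dot_upto d (f x) (es!k) * dot_upto d z (es!k))"
      if "x \<in> A" for x
      using f that unfolding parseval_def by blast
    have "dot_upto d w z = (\<Sum>x\<in>A. a x * (\<Sum>k<length es. dot_upto d (f x) (es!k) * dot_upto d z (es!k)))"
      unfolding lin by (intro sum.cong refl) (simp only: fx)
    also have "\<dots> = (\<Sum>k<length es. (\<Sum>x\<in>A. a x * dot_upto d (f x) (es!k)) * dot_upto d z (es!k))"
      unfolding sum_distrib_left by (subst sum.swap) (simp add: sum_distrib_right mult.assoc)
    also have "\<dots> = (\<Sum>k<length es. dot_upto d w (es!k) * dot_upto d z (es!k))"
      unfolding lin ..
    finally show ?thesis .
  qed
  then show ?thesis unfolding parseval_def by blast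
qed

lemma (in vec_space) exists_column_basis:
  assumes A: "A \<in> carrier_mat n nc"
  shows "\<exists>S. finite S \<and> S \<subseteq> carrier_vec n \<and> card S = rank A \<and> (\<forall>i<nc. col A i \<in> span S)"
proof -
  have cols: "set (cols A) \<subseteq> carrier_vec n" using A cols_dim by blast
  have "lin_indpt {}" unfolding lin_dep_def by simp
  then obtain S where "finite S" and max: "maximal S (\<lambda>T. T \<subseteq> set (cols A) \<and> lin_indpt T)"
    using maximal_exists_superset[of "set (cols A)" "\<lambda>T. T \<subseteq> set (cols A) \<and> lin_indpt T" "{}"]
    by auto
  have S: "S \<subseteq> set (cols A)" "lin_indpt S" using max unfolding maximal_def by auto
  have S_carrier: "S \<subseteq> carrier_vec n" using S cols by blast
  have "v \<in> span S" if v: "v \<in> set (cols A)" for v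
  proof (rule ccontr)
    assume nv: "v \<notin> span S"
    have "v \<notin> S" using nv in_own_span[OF S_carrier] by blast
    moreover have "lin_indpt (S \<union> {v})"
      using lin_dep_iff_in_span[OF S_carrier S(2) _ \<open>v \<notin> S\<close>] nv v cols by auto
    then have "S \<union> {v} = S" using max S v unfolding maximal_def by blast
    ultimately show False by blast
  qed
  then have "\<forall>i<nc. col A i \<in> span S" using A by (simp add: cols_def)
  then show ?thesis
    using \<open>finite S\<close> S_carrier rank_card_indpt[OF A max] by auto
qed

lemma gram_factorization_rank:
  fixes V :: "real mat"
  assumes V: "V \<in> carrier_mat d n"
  shows "\<exists>r y. r \<le> vec_space.rank d V \<and>
           (\<forall>i<n. \<forall>j<n. col V i \<bullet> col V j = (\<Sum>k<r. y i k * y j k))"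
proof -
  interpret vs: vec_space "TYPE(real)" d .
  obtain S where "finite S" and S_carrier: "S \<subseteq> carrier_vec d" and card_S: "card S = vs.rank V"
    and col_span: "\<And>i. i < n \<Longrightarrow> col V i \<in> vs.span S"
    using vs.exists_column_basis[OF V] by blast
  obtain bs where bs: "set bs = S" "distinct bs" using finite_distinct_list[OF \<open>finite S\<close>] by blast
  obtain es where len: "length es \<le> length bs"
    and pv: "\<forall>b\<in>set bs. parseval d es (vec_index b)"
    using orthonormal_expansion_exists[of "map vec_index bs" d] by auto
  define y where "y i k = dot_upto d (vec_index (col V i)) (es!k)" for i k
  have col_parseval: "parseval d es (vec_index (col V i))" if i: "i < n" for i
  proof -
    obtain a A where A: "A \<subseteq> S" and lc: "vs.lincomb a A = col V i"
      using col_span[OF i] unfolding vs.span_def mem_Collect_eq by (elim exE conjE) (rule that; simp)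
    have "finite A" and A_carrier: "A \<subseteq> carrier_vec d"
      using A S_carrier \<open>finite S\<close> finite_subset by auto
    have "\<forall>l<d. col V i $ l = (\<Sum>x\<in>A. a x * x $ l)"
      using vs.lincomb_index[OF _ A_carrier, of _ a] unfolding lc by simp
    then show ?thesis
      using pv A bs(1) \<open>finite A\<close> by (intro parseval_lincomb[where f = vec_index and A = A and a = a]) auto
  qed
  have "col V i \<bullet> col V j = (\<Sum>k<length es. y i k * y j k)" if "i < n" "j < n" for i j
  proof -
    have "col V i \<bullet> col V j = dot_upto d (vec_index (col V i)) (vec_index (col V j))"
      using V unfolding scalar_prod_def dot_upto_def by (simp add: atLeast0LessThan)
    also have "\<dots> = (\<Sum>k<length es. y i k * y j k)"
      using col_parseval[OF that(1)] unfolding parseval_def y_def by blast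
    finally show ?thesis .
  qed
  moreover have "length es \<le> vec_space.rank d V"
    using len card_S distinct_card[OF bs(2)] bs(1) by simp
  ultimately show ?thesis by blast
qed


section \<open>Triangle weights of low-rank Gram matrices\<close>

lemma gram_trace_square_le:
  fixes z :: "nat \<Rightarrow> nat \<Rightarrow> real"
  assumes "finite R"
  shows "(\<Sum>i\<in>R. \<Sum>k<r. (z i k)\<^sup>2)\<^sup>2 \<le> real r * (\<Sum>i\<in>R. \<Sum>j\<in>R. (\<Sum>k<r. z i k * z j k)\<^sup>2)"
proof -
  define X where "X k l = (\<Sum>i\<in>R. z i k * z i l)" for k l
  have "(\<Sum>i\<in>R. \<Sum>k<r. (z i k)\<^sup>2) = (\<Sum>k<r. X k k)"
    unfolding X_def power2_eq_square by (rule sum.swap)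
  also have "(\<Sum>k<r. X k k)\<^sup>2 \<le> real r * (\<Sum>k<r. (X k k)\<^sup>2)"
    using Cauchy_Schwarz_ineq_sum[of "\<lambda>k. X k k" "\<lambda>_. 1" "{..<r}"] by (simp add: mult.commute)
  also have "(\<Sum>k<r. (X k k)\<^sup>2) \<le> (\<Sum>k<r. \<Sum>l<r. (X k l)\<^sup>2)"
    by (intro sum_mono member_le_sum) auto
  also have "(\<Sum>k<r. \<Sum>l<r. (X k l)\<^sup>2) = (\<Sum>i\<in>R. \<Sum>j\<in>R. (\<Sum>k<r. z i k * z j k)\<^sup>2)"
  proof -
    have "(\<Sum>k<r. \<Sum>l<r. (X k l)\<^sup>2) = (\<Sum>k<r. \<Sum>l<r. \<Sum>i\<in>R. \<Sum>j\<in>R. z i k * z i l * (z j k * z j l))"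
      unfolding X_def power2_eq_square sum_product ..
    also have "\<dots> = (\<Sum>k<r. \<Sum>i\<in>R. \<Sum>l<r. \<Sum>j\<in>R. z i k * z i l * (z j k * z j l))"
      by (rule sum.cong[OF refl], rule sum.swap)
    also have "\<dots> = (\<Sum>k<r. \<Sum>i\<in>R. \<Sum>j\<in>R. \<Sum>l<r. z i k * z i l * (z j k * z j l))"
      by (rule sum.cong[OF refl], rule sum.cong[OF refl], rule sum.swap)
    also have "\<dots> = (\<Sum>i\<in>R. \<Sum>k<r. \<Sum>j\<in>R. \<Sum>l<r. z i k * z i l * (z j k * z j l))"
      by (rule sum.swap)
    also have "\<dots> = (\<Sum>i\<in>R. \<Sum>j\<in>R. \<Sum>k<r. \<Sum>l<r. z i k * z i l * (z j k * z j l))"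
      by (rule sum.cong[OF refl], rule sum.swap)
    also have "\<dots> = (\<Sum>i\<in>R. \<Sum>j\<in>R. (\<Sum>k<r. z i k * z j k)\<^sup>2)"
      unfolding power2_eq_square sum_product by (simp add: mult_ac)
    finally show ?thesis .
  qed
  finally show ?thesis by (simp add: mult_left_mono)
qed

lemma unit_gram_sum_squares_le:
  fixes z :: "nat \<Rightarrow> nat \<Rightarrow> real"
  assumes unit: "\<And>i. i \<in> R \<Longrightarrow> (\<Sum>k<r. (z i k)\<^sup>2) = 1"
  shows "(\<Sum>i\<in>R. \<Sum>j\<in>R. (\<Sum>k<r. z i k * z j k)\<^sup>2)
           \<le> 2 * (\<Sum>i\<in>R. \<Sum>j\<in>R. max 0 (\<Sum>k<r. z i k * z j k))"
proof -
  define N where "N i j = (\<Sum>k<r. z i k * z j k)" for i j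
  have N_abs: "\<bar>N i j\<bar> \<le> 1" if "i \<in> R" "j \<in> R" for i j
  proof -
    have "(N i j)\<^sup>2 \<le> 1"
      using Cauchy_Schwarz_ineq_sum[of "z i" "z j" "{..<r}"] unit that unfolding N_def by simp
    then show ?thesis by (simp add: abs_square_le_1)
  qed
  then have N_sq: "(N i j)\<^sup>2 \<le> 2 * max 0 (N i j) - N i j" if "i \<in> R" "j \<in> R" for i j
  proof (cases "N i j \<ge> 0")
    case True
    then have "N i j * N i j \<le> N i j * 1"
      using N_abs[OF that] by (intro mult_left_mono) auto
    then show ?thesis using True by (simp add: power2_eq_square)
  next
    case False
    then have "(- N i j) * (- N i j) \<le> (- N i j) * 1"
      using N_abs[OF that] by (intro mult_left_mono) auto
    then show ?thesis using False by (simp add: power2_eq_square)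
  qed
  have "(\<Sum>i\<in>R. \<Sum>j\<in>R. N i j) = (\<Sum>i\<in>R. \<Sum>k<r. \<Sum>j\<in>R. z i k * z j k)"
    unfolding N_def by (rule sum.cong[OF refl], rule sum.swap)
  also have "\<dots> = (\<Sum>k<r. (\<Sum>i\<in>R. z i k)\<^sup>2)"
    unfolding power2_eq_square sum_product by (rule sum.swap)
  finally have N_sum: "0 \<le> (\<Sum>i\<in>R. \<Sum>j\<in>R. N i j)" by (simp add: sum_nonneg)
  have "(\<Sum>i\<in>R. \<Sum>j\<in>R. (N i j)\<^sup>2) \<le> (\<Sum>i\<in>R. \<Sum>j\<in>R. 2 * max 0 (N i j) - N i j)"
    using N_sq by (intro sum_mono) auto
  also have "\<dots> = 2 * (\<Sum>i\<in>R. \<Sum>j\<in>R. max 0 (N i j)) - (\<Sum>i\<in>R. \<Sum>j\<in>R. N i j)"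
    by (simp add: sum_subtractf sum_distrib_left)
  finally show ?thesis using N_sum unfolding N_def by linarith
qed

lemma normalized_inner_le_clamp:
  fixes g a b t :: real
  assumes "0 < t" "t \<le> 1" "t \<le> a" "t \<le> b" and cs: "g\<^sup>2 \<le> a * b"
  shows "max 0 (g / (sqrt a * sqrt b)) \<le> max 0 (min g 1) / t"
proof -
  have "t \<le> sqrt (a * b)"
    using assms real_sqrt_le_mono[of "t * t" "a * b"] mult_mono[of t a t b] by simp
  then have ab: "t \<le> sqrt a * sqrt b" by (simp add: real_sqrt_mult)
  have "g \<le> sqrt a * sqrt b"
    using real_sqrt_le_mono[OF cs] real_sqrt_abs[of g] by (simp add: real_sqrt_mult)
  show ?thesis
  proof (cases "g \<le> 0")
    case True
    then show ?thesis using ab \<open>0 < t\<close> by (simp add: divide_nonpos_pos)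
  next
    case False
    show ?thesis
    proof (cases "g \<le> 1")
      case True
      have "g / (sqrt a * sqrt b) \<le> g / t"
        using False ab \<open>0 < t\<close> by (intro divide_left_mono) auto
      then show ?thesis using True False \<open>0 < t\<close> by simp
    next
      case g1: False
      have "0 \<le> g / (sqrt a * sqrt b)" "g / (sqrt a * sqrt b) \<le> 1"
        using False \<open>g \<le> sqrt a * sqrt b\<close> ab \<open>0 < t\<close> by auto
      moreover have "1 \<le> 1 / t" using \<open>0 < t\<close> \<open>t \<le> 1\<close> by simp
      ultimately show ?thesis using g1 by simp
    qed
  qed
qed

lemma clamp_le_threshold:
  fixes g a b t :: real
  assumes "0 \<le> a" "a < t" "0 \<le> b" "b < t" and cs: "g\<^sup>2 \<le> a * b"
  shows "max 0 (min g 1) \<le> t"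
proof -
  have "a * b \<le> t * t" using assms by (intro mult_mono) auto
  with cs have "g\<^sup>2 \<le> t\<^sup>2" by (simp add: power2_eq_square)
  then have "g \<le> t" by (rule power2_le_imp_le) (use assms in auto)
  then show ?thesis using assms by (auto simp: max_def min_def)
qed

lemma triple_sum_star_le:
  fixes q :: "nat \<Rightarrow> nat \<Rightarrow> real"
  assumes "finite S"
    and nn: "\<And>i j. i \<in> S \<Longrightarrow> j \<in> S \<Longrightarrow> 0 \<le> q i j"
    and deg: "\<And>i. i \<in> S \<Longrightarrow> (\<Sum>j\<in>S. q i j) \<le> c"
  shows "(\<Sum>i\<in>S. \<Sum>j\<in>S. \<Sum>k\<in>S. if P i then q i j * q i k else 0) \<le> real (card {i\<in>S. P i}) * c\<^sup>2"
proof -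
  have "(\<Sum>i\<in>S. \<Sum>j\<in>S. \<Sum>k\<in>S. if P i then q i j * q i k else 0)
      = (\<Sum>i\<in>S. if P i then (\<Sum>j\<in>S. q i j) * (\<Sum>k\<in>S. q i k) else 0)"
    by (intro sum.cong refl) (auto simp: sum_product)
  also have "\<dots> \<le> (\<Sum>i\<in>S. if P i then c\<^sup>2 else 0)"
  proof (rule sum_mono)
    fix i assume i: "i \<in> S"
    have "0 \<le> (\<Sum>j\<in>S. q i j)" using nn[OF i] by (simp add: sum_nonneg)
    then have "(\<Sum>j\<in>S. q i j) * (\<Sum>k\<in>S. q i k) \<le> c * c"
      using deg[OF i] by (intro mult_mono) auto
    then show "(if P i then (\<Sum>j\<in>S. q i j) * (\<Sum>k\<in>S. q i k) else 0) \<le> (if P i then c\<^sup>2 else 0)"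
      by (simp add: power2_eq_square)
  qed
  also have "\<dots> = real (card {i\<in>S. P i}) * c\<^sup>2"
    using sum.inter_filter[OF \<open>finite S\<close>, of "\<lambda>_. c\<^sup>2" P] by simp
  finally show ?thesis .
qed

lemma triangle_weight_le_heavy:
  fixes q :: "nat \<Rightarrow> nat \<Rightarrow> real"
  assumes "finite S" and "0 \<le> t"
    and nn: "\<And>i j. i \<in> S \<Longrightarrow> j \<in> S \<Longrightarrow> 0 \<le> q i j"
    and le1: "\<And>i j. i \<in> S \<Longrightarrow> j \<in> S \<Longrightarrow> q i j \<le> 1"
    and sym: "\<And>i j. i \<in> S \<Longrightarrow> j \<in> S \<Longrightarrow> q i j = q j i"
    and deg: "\<And>i. i \<in> S \<Longrightarrow> (\<Sum>j\<in>S. q i j) \<le> c"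
    and light: "\<And>i j. i \<in> S \<Longrightarrow> j \<in> S \<Longrightarrow> \<not> H i \<Longrightarrow> \<not> H j \<Longrightarrow> q i j \<le> t"
  shows "(\<Sum>i\<in>S. \<Sum>j\<in>S. \<Sum>k\<in>S. q i j * q i k * q j k)
           \<le> 2 * (real (card {i\<in>S. H i}) * c\<^sup>2) + t * (real (card S) * c\<^sup>2)"
proof -
  let ?star = "\<lambda>i j k. if H i then q i j * q i k else 0"
  have pointwise: "q i j * q i k * q j k \<le> ?star i j k + ?star j i k + t * (q k i * q k j)"
    if "i \<in> S" "j \<in> S" "k \<in> S" for i j k
  proof -
    have "q i j * q i k * q j k \<le> q i j * q i k"
      using nn le1 that by (simp add: mult_left_le)
    moreover have "q j i * q j k * q i k \<le> q j i * q j k"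
      using nn le1 that by (simp add: mult_left_le)
    then have "q i j * q i k * q j k \<le> q j i * q j k"
      using sym[of i j] that by (simp add: mult_ac)
    moreover have "q i j * q i k * q j k \<le> t * (q k i * q k j)" if "\<not> H i" "\<not> H j"
      using light[of i j] nn sym \<open>i \<in> S\<close> \<open>j \<in> S\<close> \<open>k \<in> S\<close> that
      by (simp add: mult.assoc mult_right_mono mult_nonneg_nonneg)
    moreover have "0 \<le> ?star i j k" "0 \<le> ?star j i k" "0 \<le> t * (q k i * q k j)"
      using nn that \<open>0 \<le> t\<close> by auto
    ultimately show ?thesis by (cases "H i"; cases "H j") auto
  qed
  have "(\<Sum>i\<in>S. \<Sum>j\<in>S. \<Sum>k\<in>S. q i j * q i k * q j k)
      \<le> (\<Sum>i\<in>S. \<Sum>j\<in>S. \<Sum>k\<in>S. ?star i j k + ?star j i k + t * (q k i * q k j))"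
    by (intro sum_mono) (simp add: pointwise)
  also have "\<dots> = (\<Sum>i\<in>S. \<Sum>j\<in>S. \<Sum>k\<in>S. ?star i j k) + (\<Sum>i\<in>S. \<Sum>j\<in>S. \<Sum>k\<in>S. ?star j i k)
        + t * (\<Sum>i\<in>S. \<Sum>j\<in>S. \<Sum>k\<in>S. q k i * q k j)"
    by (simp add: sum.distrib sum_distrib_left)
  also have "(\<Sum>i\<in>S. \<Sum>j\<in>S. \<Sum>k\<in>S. ?star j i k) = (\<Sum>j\<in>S. \<Sum>i\<in>S. \<Sum>k\<in>S. ?star j i k)"
    by (rule sum.swap)
  also have "(\<Sum>i\<in>S. \<Sum>j\<in>S. \<Sum>k\<in>S. q k i * q k j) = (\<Sum>k\<in>S. \<Sum>i\<in>S. \<Sum>j\<in>S. q k i * q k j)"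
    by (subst sum.swap, rule sum.cong[OF refl], rule sum.swap)
  also have "\<dots> \<le> real (card S) * c\<^sup>2"
    using triple_sum_star_le[of S q c "\<lambda>_. True"] \<open>finite S\<close> nn deg by simp
  finally show ?thesis
    using triple_sum_star_le[of S q c H] \<open>finite S\<close> nn deg \<open>0 \<le> t\<close>
    by (simp add: mult_left_mono)
qed

lemma heavy_vertices_card_le:
  fixes y q :: "nat \<Rightarrow> nat \<Rightarrow> real"
  assumes "finite R" "0 < t" "t \<le> 1" "1 \<le> c"
    and heavy: "\<And>i. i \<in> R \<Longrightarrow> t \<le> (\<Sum>k<r. (y i k)\<^sup>2)"
    and q_off: "\<And>i j. i \<in> R \<Longrightarrow> j \<in> R \<Longrightarrow> i \<noteq> j \<Longrightarrow> q i j = max 0 (min (\<Sum>k<r. y i k * y j k) 1)"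
    and nn: "\<And>i j. i \<in> R \<Longrightarrow> j \<in> R \<Longrightarrow> 0 \<le> q i j"
    and deg: "\<And>i. i \<in> R \<Longrightarrow> (\<Sum>j\<in>R. q i j) \<le> c"
  shows "real (card R) * t \<le> 4 * real r * c"
proof -
  define a where "a i = (\<Sum>k<r. (y i k)\<^sup>2)" for i
  define z where "z i k = y i k / sqrt (a i)" for i k
  have a_pos: "0 < a i" if "i \<in> R" for i
    using heavy[OF that] \<open>0 < t\<close> unfolding a_def by simp
  have unit: "(\<Sum>k<r. (z i k)\<^sup>2) = 1" if "i \<in> R" for i
    using a_pos[OF that] unfolding z_def by (simp add: power_divide flip: sum_divide_distrib a_def)
  have N_eq: "(\<Sum>k<r. z i k * z j k) = (\<Sum>k<r. y i k * y j k) / (sqrt (a i) * sqrt (a j))" for i j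
    unfolding z_def by (simp add: sum_divide_distrib)
  have N_le: "max 0 (\<Sum>k<r. z i k * z j k) \<le> of_bool (i = j) + q i j / t" if "i \<in> R" "j \<in> R" for i j
  proof (cases "i = j")
    case True
    have "(\<Sum>k<r. z i k * z i k) = 1" using unit[OF that(1)] by (simp add: power2_eq_square)
    then show ?thesis using True nn[OF that] \<open>0 < t\<close> by simp
  next
    case False
    have "(\<Sum>k<r. y i k * y j k)\<^sup>2 \<le> a i * a j"
      unfolding a_def by (rule Cauchy_Schwarz_ineq_sum)
    then have "max 0 (\<Sum>k<r. z i k * z j k) \<le> q i j / t"
      using normalized_inner_le_clamp[OF \<open>0 < t\<close> \<open>t \<le> 1\<close>] heavy[OF that(1)] heavy[OF that(2)]
      unfolding N_eq q_off[OF that False] a_def by blast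
    then show ?thesis using False by simp
  qed
  have row: "(\<Sum>j\<in>R. max 0 (\<Sum>k<r. z i k * z j k)) \<le> 2 * c / t" if "i \<in> R" for i
  proof -
    have "(\<Sum>j\<in>R. max 0 (\<Sum>k<r. z i k * z j k)) \<le> (\<Sum>j\<in>R. of_bool (i = j) + q i j / t)"
      using N_le that by (intro sum_mono) auto
    also have "\<dots> = 1 + (\<Sum>j\<in>R. q i j) / t"
      using that \<open>finite R\<close> by (simp add: sum.distrib sum_divide_distrib)
    also have "\<dots> \<le> 1 + c / t"
      using deg[OF that] \<open>0 < t\<close> by (simp add: divide_right_mono)
    also have "\<dots> \<le> 2 * c / t"
      using \<open>0 < t\<close> \<open>t \<le> 1\<close> \<open>1 \<le> c\<close> by (simp add: field_simps)
    finally show ?thesis .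
  qed
  have "(real (card R))\<^sup>2 \<le> real r * (\<Sum>i\<in>R. \<Sum>j\<in>R. (\<Sum>k<r. z i k * z j k)\<^sup>2)"
    using gram_trace_square_le[OF \<open>finite R\<close>, where z = z and r = r] unit by simp
  also have "\<dots> \<le> real r * (2 * (\<Sum>i\<in>R. \<Sum>j\<in>R. max 0 (\<Sum>k<r. z i k * z j k)))"
    using unit_gram_sum_squares_le[where R = R and r = r and z = z] unit by (simp add: mult_left_mono)
  also have "\<dots> \<le> real r * (2 * (real (card R) * (2 * c / t)))"
  proof -
    have "(\<Sum>i\<in>R. \<Sum>j\<in>R. max 0 (\<Sum>k<r. z i k * z j k)) \<le> (\<Sum>i\<in>R. 2 * c / t)"
      using row by (rule sum_mono)
    then have "2 * (\<Sum>i\<in>R. \<Sum>j\<in>R. max 0 (\<Sum>k<r. z i k * z j k)) \<le> 2 * (real (card R) * (2 * c / t))"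
      by simp
    then show ?thesis by (rule mult_left_mono) simp
  qed
  finally have "real (card R) * real (card R) * t \<le> real (card R) * (4 * real r * c)"
    using \<open>0 < t\<close> by (simp add: power2_eq_square field_simps)
  then show ?thesis
    using \<open>1 \<le> c\<close> by (cases "card R = 0") (auto simp: mult.assoc)
qed

lemma triangle_weight_le_norm_heavy:
  fixes y q :: "nat \<Rightarrow> nat \<Rightarrow> real"
  assumes "finite S" "0 \<le> t"
    and nn: "\<And>i j. i \<in> S \<Longrightarrow> j \<in> S \<Longrightarrow> 0 \<le> q i j"
    and le1: "\<And>i j. i \<in> S \<Longrightarrow> j \<in> S \<Longrightarrow> q i j \<le> 1"
    and sym: "\<And>i j. i \<in> S \<Longrightarrow> j \<in> S \<Longrightarrow> q i j = q j i"
    and diag: "\<And>i. q i i = 0"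
    and q_off: "\<And>i j. i \<in> S \<Longrightarrow> j \<in> S \<Longrightarrow> i \<noteq> j \<Longrightarrow> q i j = max 0 (min (\<Sum>k<r. y i k * y j k) 1)"
    and deg: "\<And>i. i \<in> S \<Longrightarrow> (\<Sum>j\<in>S. q i j) \<le> c"
  shows "(\<Sum>i\<in>S. \<Sum>j\<in>S. \<Sum>k\<in>S. q i j * q i k * q j k)
           \<le> 2 * (real (card {i\<in>S. t \<le> (\<Sum>k<r. (y i k)\<^sup>2)}) * c\<^sup>2) + t * (real (card S) * c\<^sup>2)"
proof (rule triangle_weight_le_heavy[OF \<open>finite S\<close> \<open>0 \<le> t\<close> nn le1 sym deg])
  fix i j assume ij: "i \<in> S" "j \<in> S" "\<not> t \<le> (\<Sum>k<r. (y i k)\<^sup>2)" "\<not> t \<le> (\<Sum>k<r. (y j k)\<^sup>2)"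
  show "q i j \<le> t"
  proof (cases "i = j")
    case False
    have "(\<Sum>k<r. y i k * y j k)\<^sup>2 \<le> (\<Sum>k<r. (y i k)\<^sup>2) * (\<Sum>k<r. (y j k)\<^sup>2)"
      by (rule Cauchy_Schwarz_ineq_sum)
    with ij show ?thesis
      unfolding q_off[OF ij(1,2) False] by (intro clamp_le_threshold) (auto intro: sum_nonneg)
  qed (use diag \<open>0 \<le> t\<close> in simp)
qed

lemma triangle_weight_rank_bound:
  fixes y q :: "nat \<Rightarrow> nat \<Rightarrow> real" and S :: "nat set" and c \<Delta> :: real and n r :: nat
  assumes "finite S" "card S \<le> n" "0 < n" "1 \<le> c" "0 < \<Delta>"
    and nn: "\<And>i j. i \<in> S \<Longrightarrow> j \<in> S \<Longrightarrow> 0 \<le> q i j"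
    and le1: "\<And>i j. i \<in> S \<Longrightarrow> j \<in> S \<Longrightarrow> q i j \<le> 1"
    and sym: "\<And>i j. i \<in> S \<Longrightarrow> j \<in> S \<Longrightarrow> q i j = q j i"
    and diag: "\<And>i. q i i = 0"
    and q_off: "\<And>i j. i \<in> S \<Longrightarrow> j \<in> S \<Longrightarrow> i \<noteq> j \<Longrightarrow> q i j = max 0 (min (\<Sum>k<r. y i k * y j k) 1)"
    and deg: "\<And>i. i \<in> S \<Longrightarrow> (\<Sum>j\<in>S. q i j) \<le> c"
    and tri: "\<Delta> * n \<le> (\<Sum>i\<in>S. \<Sum>j\<in>S. \<Sum>k\<in>S. q i j * q i k * q j k)"
  shows "\<Delta> \<le> 2 * c\<^sup>2 \<and> \<Delta>\<^sup>2 * n \<le> 32 * c ^ 5 * r"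
proof -
  have "(\<Sum>i\<in>S. \<Sum>j\<in>S. \<Sum>k\<in>S. q i j * q i k * q j k)
      \<le> 2 * (real (card {i\<in>S. True}) * c\<^sup>2) + 0 * (real (card S) * c\<^sup>2)"
    by (rule triangle_weight_le_heavy[OF \<open>finite S\<close> _ nn le1 sym deg]) simp_all
  then have "\<Delta> * n \<le> 2 * (real n * c\<^sup>2)"
    using tri mult_right_mono[of "real (card S)" n "c\<^sup>2"] \<open>card S \<le> n\<close> by simp
  then have "\<Delta> \<le> 2 * c\<^sup>2" using \<open>0 < n\<close> by (simp add: mult.commute)
  define t where "t = \<Delta> / (2 * c\<^sup>2)"
  have "0 < t" "t \<le> 1" using \<open>\<Delta> \<le> 2 * c\<^sup>2\<close> \<open>0 < \<Delta>\<close> \<open>1 \<le> c\<close> unfolding t_def by auto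
  define R where "R = {i\<in>S. t \<le> (\<Sum>k<r. (y i k)\<^sup>2)}"
  have "t * (real (card S) * c\<^sup>2) \<le> \<Delta> / 2 * n"
    using \<open>card S \<le> n\<close> \<open>0 < \<Delta>\<close> \<open>1 \<le> c\<close> unfolding t_def by (simp add: field_simps)
  then have many_heavy: "\<Delta> * n \<le> 4 * (real (card R) * c\<^sup>2)"
    using tri triangle_weight_le_norm_heavy[OF \<open>finite S\<close> _ nn le1 sym diag q_off deg, of t] \<open>0 < t\<close>
    unfolding R_def by linarith
  have "R \<subseteq> S" unfolding R_def by auto
  then have "(\<Sum>j\<in>R. q i j) \<le> c" if "i \<in> R" for i
    using sum_mono2[OF \<open>finite S\<close> \<open>R \<subseteq> S\<close>, of "q i"] deg[of i] nn[of i] that by auto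
  then have card_R: "real (card R) * t \<le> 4 * real r * c"
    using \<open>finite S\<close> \<open>R \<subseteq> S\<close> \<open>0 < t\<close> \<open>t \<le> 1\<close> \<open>1 \<le> c\<close> q_off nn finite_subset
    by (intro heavy_vertices_card_le[where q = q and y = y]) (auto simp: R_def)
  have "\<Delta> * n * t \<le> 4 * (real (card R) * t) * c\<^sup>2"
    using mult_right_mono[OF many_heavy, of t] \<open>0 < t\<close>
    by (simp add: mult_ac)
  also have "\<dots> \<le> 4 * (4 * real r * c) * c\<^sup>2"
    using mult_right_mono[OF card_R, of "c\<^sup>2"] by (simp add: mult_ac)
  finally have "\<Delta> * n * t * (2 * c\<^sup>2) \<le> 4 * (4 * real r * c) * c\<^sup>2 * (2 * c\<^sup>2)"
    by (rule mult_right_mono) simp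
  moreover have "\<Delta> * n * t * (2 * c\<^sup>2) = \<Delta>\<^sup>2 * n"
    using \<open>1 \<le> c\<close> unfolding t_def by (simp add: power2_eq_square)
  moreover have "4 * (4 * real r * c) * c\<^sup>2 * (2 * c\<^sup>2) = 32 * c ^ 5 * r"
    by (simp add: power2_eq_square numeral_eq_Suc)
  ultimately have "\<Delta>\<^sup>2 * n \<le> 32 * c ^ 5 * r" by linarith
  with \<open>\<Delta> \<le> 2 * c\<^sup>2\<close> show ?thesis ..
qed


section \<open>The random graph \<open>\<G>\<^sub>V\<close>\<close>

lemma edge_prob_nonneg: "0 \<le> edge_prob V i j"
  and edge_prob_le_1: "edge_prob V i j \<le> 1"
  unfolding edge_prob_def by auto

lemma edge_prob_commute: "edge_prob V i j = edge_prob V j i"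
  unfolding edge_prob_def using comm_scalar_prod[OF col_dim col_dim] by metis

lemma edge_prob_min_max: "edge_prob V (min i j) (max i j) = edge_prob V i j"
  by (cases "i \<le> j") (auto simp: max_def min_def edge_prob_commute)

definition pair_prob :: "real mat \<Rightarrow> nat \<Rightarrow> nat \<Rightarrow> real" where
  "pair_prob V i j = (if i = j then 0 else edge_prob V i j)"

lemma pair_prob_nonneg: "0 \<le> pair_prob V i j"
  and pair_prob_le_1: "pair_prob V i j \<le> 1"
  and pair_prob_self: "pair_prob V i i = 0"
  and pair_prob_commute: "pair_prob V i j = pair_prob V j i"
  unfolding pair_prob_def by (auto simp: edge_prob_nonneg edge_prob_le_1 edge_prob_commute)

lemma doubleton_in_vertex_pairs_iff: "{i, j} \<in> vertex_pairs n \<longleftrightarrow> i < n \<and> j < n \<and> i \<noteq> j"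
  unfolding vertex_pairs_def by (auto simp: doubleton_eq_iff)

lemma finite_vertex_pairs: "finite (vertex_pairs n)"
proof -
  have "vertex_pairs n \<subseteq> Pow {..<n}" unfolding vertex_pairs_def by auto
  then show ?thesis by (rule finite_subset) simp
qed

definition edge_indicator_pmf :: "real mat \<Rightarrow> (nat set \<Rightarrow> bool) pmf" where
  "edge_indicator_pmf V = Pi_pmf (vertex_pairs (dim_col V)) False
     (\<lambda>e. bernoulli_pmf (edge_prob V (Min e) (Max e)))"

lemma graph_pmf_eq_map:
  "graph_pmf V = map_pmf (\<lambda>b. {e \<in> vertex_pairs (dim_col V). b e}) (edge_indicator_pmf V)"
  unfolding graph_pmf_def edge_indicator_pmf_def ..

lemma finite_set_pmf_edge_indicator_pmf: "finite (set_pmf (edge_indicator_pmf V))"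
proof -
  let ?P = "vertex_pairs (dim_col V)"
  have "set_pmf (edge_indicator_pmf V) \<subseteq> {f. \<forall>x. x \<notin> ?P \<longrightarrow> f x = False}"
    unfolding edge_indicator_pmf_def by (rule set_Pi_pmf_subset[OF finite_vertex_pairs])
  also have "\<dots> = PiE_dflt ?P False (\<lambda>_. UNIV)"
    unfolding PiE_dflt_def by auto
  finally show ?thesis
    using finite_vertex_pairs by (rule finite_subset[OF _ finite_PiE_dflt]) auto
qed

lemma integrable_graph_pmf: "integrable (measure_pmf (graph_pmf V)) (f :: nat set set \<Rightarrow> real)"
  by (rule integrable_measure_pmf_finite)
    (simp add: graph_pmf_eq_map finite_set_pmf_edge_indicator_pmf)

lemma set_pmf_graph_pmf_subset: "E \<in> set_pmf (graph_pmf V) \<Longrightarrow> E \<subseteq> vertex_pairs (dim_col V)"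
  unfolding graph_pmf_eq_map by auto

lemma expectation_prod_edge_indicators:
  assumes F: "F \<subseteq> vertex_pairs (dim_col V)"
  shows "measure_pmf.expectation (graph_pmf V) (\<lambda>E. \<Prod>e\<in>F. of_bool (e \<in> E))
         = (\<Prod>e\<in>F. edge_prob V (Min e) (Max e))"
proof -
  let ?P = "vertex_pairs (dim_col V)"
  let ?f = "\<lambda>e (v::bool). if e \<in> F then (of_bool v :: real) else 1"
  have indicators: "(\<Prod>e\<in>F. of_bool (e \<in> {e \<in> ?P. b e})) = (\<Prod>e\<in>?P. ?f e (b e))" for b
  proof -
    have "(\<Prod>e\<in>F. of_bool (e \<in> {e \<in> ?P. b e})) = (\<Prod>e\<in>{e\<in>?P. e \<in> F}. (of_bool (b e) :: real))"
      using F by (intro prod.cong) auto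
    also have "\<dots> = (\<Prod>e\<in>?P. ?f e (b e))"
      using finite_vertex_pairs by (simp add: prod.inter_filter)
    finally show ?thesis .
  qed
  have "measure_pmf.expectation (graph_pmf V) (\<lambda>E. \<Prod>e\<in>F. of_bool (e \<in> E))
      = measure_pmf.expectation (edge_indicator_pmf V) (\<lambda>b. \<Prod>e\<in>?P. ?f e (b e))"
    unfolding graph_pmf_eq_map integral_map_pmf indicators ..
  also have "\<dots> = (\<Prod>e\<in>?P. measure_pmf.expectation (bernoulli_pmf (edge_prob V (Min e) (Max e))) (?f e))"
    unfolding edge_indicator_pmf_def
    by (rule expectation_prod_Pi_pmf[OF finite_vertex_pairs]) (auto intro!: integrable_measure_pmf_finite)
  also have "\<dots> = (\<Prod>e\<in>?P. if e \<in> F then edge_prob V (Min e) (Max e) else 1)"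
    by (intro prod.cong refl) (simp add: edge_prob_nonneg edge_prob_le_1)
  also have "\<dots> = (\<Prod>e\<in>{e\<in>?P. e \<in> F}. edge_prob V (Min e) (Max e))"
    using finite_vertex_pairs by (simp add: prod.inter_filter)
  also have "{e\<in>?P. e \<in> F} = F" using F by auto
  finally show ?thesis .
qed

lemma expected_degree_eq:
  assumes i: "i < dim_col V"
  shows "expected_degree V i = (\<Sum>j<dim_col V. pair_prob V i j)"
proof -
  let ?n = "dim_col V"
  let ?I = "{..<?n} - {i}"
  have degree_eq: "real (degree E i) = (\<Sum>j\<in>?I. \<Prod>e\<in>{{i,j}}. of_bool (e \<in> E))"
    if "E \<in> set_pmf (graph_pmf V)" for E
  proof -
    have "{j. {i, j} \<in> E \<and> j \<noteq> i} = ?I \<inter> {j. {i,j} \<in> E}"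
      using set_pmf_graph_pmf_subset[OF that] doubleton_in_vertex_pairs_iff[of i _ ?n] by auto
    then show ?thesis unfolding degree_def by (simp add: sum_of_bool_eq)
  qed
  have "expected_degree V i
      = measure_pmf.expectation (graph_pmf V) (\<lambda>E. \<Sum>j\<in>?I. \<Prod>e\<in>{{i,j}}. of_bool (e \<in> E))"
    unfolding expected_degree_def using degree_eq
    by (intro integral_cong_AE) (auto simp: AE_measure_pmf_iff)
  also have "\<dots> = (\<Sum>j\<in>?I. measure_pmf.expectation (graph_pmf V) (\<lambda>E. \<Prod>e\<in>{{i,j}}. of_bool (e \<in> E)))"
    by (rule Bochner_Integration.integral_sum) (rule integrable_graph_pmf)
  also have "\<dots> = (\<Sum>j\<in>?I. pair_prob V i j)"
  proof (rule sum.cong[OF refl])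
    fix j assume j: "j \<in> ?I"
    then have "{{i,j}} \<subseteq> vertex_pairs ?n" using i doubleton_in_vertex_pairs_iff[of i j ?n] by auto
    then show "measure_pmf.expectation (graph_pmf V) (\<lambda>E. \<Prod>e\<in>{{i,j}}. of_bool (e \<in> E)) = pair_prob V i j"
      using j expectation_prod_edge_indicators[of "{{i,j}}" V] edge_prob_min_max
      by (simp add: pair_prob_def)
  qed
  also have "\<dots> = (\<Sum>j<?n. pair_prob V i j)"
    using i by (simp add: sum_diff1 pair_prob_def[of V i i])
  finally show ?thesis .
qed

definition triangle_indicator :: "nat set set \<Rightarrow> nat \<Rightarrow> nat \<Rightarrow> nat \<Rightarrow> real" where
  "triangle_indicator E i j k =
     (if i \<noteq> j \<and> i \<noteq> k \<and> j \<noteq> k then \<Prod>e\<in>{{i,j},{i,k},{j,k}}. of_bool (e \<in> E) else 0)"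

lemma triangle_indicator_eq:
  "triangle_indicator E i j k = of_bool (i \<noteq> j \<and> i \<noteq> k \<and> j \<noteq> k \<and> {i,j} \<in> E \<and> {i,k} \<in> E \<and> {j,k} \<in> E)"
proof (cases "i \<noteq> j \<and> i \<noteq> k \<and> j \<noteq> k")
  case True
  then have "{i,j} \<noteq> {i,k}" "{i,j} \<noteq> {j,k}" "{i,k} \<noteq> {j,k}"
    by (auto simp: doubleton_eq_iff)
  with True show ?thesis unfolding triangle_indicator_def by simp
qed (auto simp: triangle_indicator_def)

text \<open>Each triangle is counted once for each of its six orderings.\<close>

lemma card_triangles_in_le:
  assumes "finite S"
  shows "real (card (triangles_in E S)) \<le> (\<Sum>i\<in>S. \<Sum>j\<in>S. \<Sum>k\<in>S. triangle_indicator E i j k)"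
proof -
  define X where "X = (S \<times> S \<times> S) \<inter> {(i,j,k). triangle_indicator E i j k = 1}"
  have "finite X" unfolding X_def using \<open>finite S\<close> by simp
  have "triangles_in E S \<subseteq> (\<lambda>(i,j,k). {i,j,k}) ` X"
  proof
    fix T assume T: "T \<in> triangles_in E S"
    then obtain i j k where "T = {i,j,k}" "i \<noteq> j" "j \<noteq> k" "i \<noteq> k"
      unfolding triangles_in_def card_3_iff by blast
    moreover have "(i,j,k) \<in> X"
      using T calculation unfolding triangles_in_def X_def triangle_indicator_eq by auto
    ultimately show "T \<in> (\<lambda>(i,j,k). {i,j,k}) ` X" by force
  qed
  then have "card (triangles_in E S) \<le> card ((\<lambda>(i,j,k). {i,j,k}) ` X)"
    using \<open>finite X\<close> by (intro card_mono) auto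
  also have "\<dots> \<le> card X" using \<open>finite X\<close> by (rule card_image_le)
  finally have "real (card (triangles_in E S)) \<le> real (card X)" by simp
  also have "real (card X) = (\<Sum>x\<in>S \<times> S \<times> S. of_bool (x \<in> {(i,j,k). triangle_indicator E i j k = 1}))"
    unfolding X_def using \<open>finite S\<close> by (simp add: sum_of_bool_eq)
  also have "\<dots> = (\<Sum>(i,j,k)\<in>S \<times> S \<times> S. triangle_indicator E i j k)"
    by (intro sum.cong refl) (auto simp: triangle_indicator_eq)
  also have "\<dots> = (\<Sum>i\<in>S. \<Sum>j\<in>S. \<Sum>k\<in>S. triangle_indicator E i j k)"
    by (simp add: sum.cartesian_product)
  finally show ?thesis .
qed

lemma expected_triangles_le:
  assumes S: "S \<subseteq> {..<dim_col V}"
  shows "measure_pmf.expectation (graph_pmf V) (\<lambda>E. real (card (triangles_in E S)))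
    \<le> (\<Sum>i\<in>S. \<Sum>j\<in>S. \<Sum>k\<in>S. pair_prob V i j * pair_prob V i k * pair_prob V j k)"
proof -
  have "finite S" using S finite_subset by blast
  have expectation_indicator:
    "measure_pmf.expectation (graph_pmf V) (\<lambda>E. triangle_indicator E i j k)
       = pair_prob V i j * pair_prob V i k * pair_prob V j k"
    if "i \<in> S" "j \<in> S" "k \<in> S" for i j k
  proof (cases "i \<noteq> j \<and> i \<noteq> k \<and> j \<noteq> k")
    case True
    then have "{i,j} \<noteq> {i,k}" "{i,j} \<noteq> {j,k}" "{i,k} \<noteq> {j,k}"
      by (auto simp: doubleton_eq_iff)
    moreover have "{{i,j},{i,k},{j,k}} \<subseteq> vertex_pairs (dim_col V)"
      using that S True doubleton_in_vertex_pairs_iff by auto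
    ultimately show ?thesis
      using True expectation_prod_edge_indicators[of "{{i,j},{i,k},{j,k}}" V]
      by (simp add: triangle_indicator_def pair_prob_def edge_prob_min_max mult.assoc)
  qed (auto simp: triangle_indicator_def pair_prob_def)
  have "measure_pmf.expectation (graph_pmf V) (\<lambda>E. real (card (triangles_in E S)))
      \<le> measure_pmf.expectation (graph_pmf V) (\<lambda>E. \<Sum>i\<in>S. \<Sum>j\<in>S. \<Sum>k\<in>S. triangle_indicator E i j k)"
    by (intro integral_mono integrable_graph_pmf card_triangles_in_le[OF \<open>finite S\<close>])
  also have "\<dots> = (\<Sum>i\<in>S. \<Sum>j\<in>S. \<Sum>k\<in>S. measure_pmf.expectation (graph_pmf V) (\<lambda>E. triangle_indicator E i j k))"
    by (simp add: Bochner_Integration.integral_sum integrable_graph_pmf)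
  also have "\<dots> = (\<Sum>i\<in>S. \<Sum>j\<in>S. \<Sum>k\<in>S. pair_prob V i j * pair_prob V i k * pair_prob V j k)"
    by (intro sum.cong refl) (simp add: expectation_indicator)
  finally show ?thesis .
qed


section \<open>The rank bound\<close>

lemma low_degree_triangles_rank_bound:
  fixes V :: "real mat" and c \<Delta> :: real
  assumes V: "V \<in> carrier_mat d n" and "0 < n" "1 \<le> c" "0 < \<Delta>"
    and tri: "\<Delta> * n \<le> measure_pmf.expectation (graph_pmf V)
                          (\<lambda>E. real (card (triangles_in E (low_degree_set V c))))"
  shows "\<Delta> \<le> 2 * c\<^sup>2 \<and> \<Delta>\<^sup>2 * n \<le> 32 * c ^ 5 * vec_space.rank d V"
proof -
  obtain r y where "r \<le> vec_space.rank d V"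
    and gram: "\<And>i j. i < n \<Longrightarrow> j < n \<Longrightarrow> col V i \<bullet> col V j = (\<Sum>k<r. y i k * y j k)"
    using gram_factorization_rank[OF V] by blast
  define S where "S = low_degree_set V c"
  have "dim_col V = n" using V by simp
  then have S: "S \<subseteq> {..<n}" unfolding S_def low_degree_set_def by auto
  have deg: "(\<Sum>j\<in>S. pair_prob V i j) \<le> c" if "i \<in> S" for i
  proof -
    have "(\<Sum>j\<in>S. pair_prob V i j) \<le> (\<Sum>j<n. pair_prob V i j)"
      using S by (intro sum_mono2) (auto simp: pair_prob_nonneg)
    also have "\<dots> = expected_degree V i"
      using expected_degree_eq[of i V] that S \<open>dim_col V = n\<close> by auto
    also have "\<dots> \<le> c" using that unfolding S_def low_degree_set_def by simp
    finally show ?thesis .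
  qed
  have tri_weight: "\<Delta> * n \<le> (\<Sum>i\<in>S. \<Sum>j\<in>S. \<Sum>k\<in>S. pair_prob V i j * pair_prob V i k * pair_prob V j k)"
    using tri expected_triangles_le[of S V] S \<open>dim_col V = n\<close> unfolding S_def by simp
  have off_diag: "pair_prob V i j = max 0 (min (\<Sum>k<r. y i k * y j k) 1)"
    if "i \<in> S" "j \<in> S" "i \<noteq> j" for i j
  proof -
    have "i < n" "j < n" using that S by auto
    then show ?thesis using gram \<open>i \<noteq> j\<close> unfolding pair_prob_def edge_prob_def by simp
  qed
  have "finite S" "card S \<le> n"
    using S finite_subset card_mono[OF _ S] by auto
  then have "\<Delta> \<le> 2 * c\<^sup>2 \<and> \<Delta>\<^sup>2 * n \<le> 32 * c ^ 5 * r"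
    using \<open>0 < n\<close> \<open>1 \<le> c\<close> \<open>0 < \<Delta>\<close> pair_prob_nonneg pair_prob_le_1 pair_prob_commute
      pair_prob_self off_diag deg tri_weight
    by (rule triangle_weight_rank_bound)
  moreover have "32 * c ^ 5 * r \<le> 32 * c ^ 5 * vec_space.rank d V"
    using \<open>r \<le> vec_space.rank d V\<close> \<open>1 \<le> c\<close> by (simp add: mult_left_mono)
  ultimately show ?thesis by linarith
qed

lemma rank_bound_weakening:
  fixes c \<Delta> \<rho> :: real and n :: nat
  assumes "0 < c" "0 < \<Delta>" "2 \<le> n" "\<Delta> \<le> 2 * c\<^sup>2" "\<Delta>\<^sup>2 * n \<le> 32 * c ^ 5 * \<rho>"
  shows "1 / 128 * (\<Delta> ^ 4 / c ^ 9) * (real n / (log 2 (real n))\<^sup>2) \<le> \<rho>"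
proof -
  have "1 \<le> log 2 (real n)" using \<open>2 \<le> n\<close> by simp
  then have "real n / (log 2 (real n))\<^sup>2 \<le> real n"
    using divide_left_mono[of 1 "(log 2 (real n))\<^sup>2" "real n"] by (simp add: one_le_power)
  moreover have "\<Delta> ^ 4 / c ^ 9 \<le> 4 * \<Delta>\<^sup>2 / c ^ 5"
  proof -
    have "\<Delta>\<^sup>2 \<le> (2 * c\<^sup>2)\<^sup>2" using assms by (intro power_mono) auto
    then have "\<Delta> ^ 4 \<le> \<Delta>\<^sup>2 * (4 * c ^ 4)"
      using mult_left_mono[of "\<Delta>\<^sup>2" "(2 * c\<^sup>2)\<^sup>2" "\<Delta>\<^sup>2"]
      by (simp add: power_mult_distrib flip: power_add power_mult)
    then have "\<Delta> ^ 4 / c ^ 9 \<le> (4 * \<Delta>\<^sup>2) * c ^ 4 / (c ^ 5 * c ^ 4)"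
      using \<open>0 < c\<close> by (simp add: divide_right_mono mult_ac flip: power_add)
    also have "\<dots> = 4 * \<Delta>\<^sup>2 / c ^ 5" using \<open>0 < c\<close> by (intro nonzero_mult_divide_mult_cancel_right) simp
    finally show ?thesis .
  qed
  ultimately have "1 / 128 * (\<Delta> ^ 4 / c ^ 9) * (real n / (log 2 (real n))\<^sup>2) \<le> 1 / 128 * (4 * \<Delta>\<^sup>2 / c ^ 5) * n"
    using assms by (intro mult_mono) auto
  also have "\<dots> \<le> \<rho>" using assms by (simp add: field_simps)
  finally show ?thesis .
qed

theorem theorem1:
  "\<exists>\<alpha>::real. \<alpha> > 0 \<and>
     (\<forall>(c::real) (\<Delta>::real) (n::nat) (d::nat) (V::real mat).
        c > 4 \<longrightarrow> \<Delta> > 0 \<longrightarrow> n \<ge> 2 \<longrightarrow> V \<in> carrier_mat d n \<longrightarrow>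
        measure_pmf.expectation (graph_pmf V)
           (\<lambda>E. real (card (triangles_in E (low_degree_set V c)))) \<ge> \<Delta> * real n \<longrightarrow>
        real (vec_space.rank d V) \<ge> \<alpha> * (\<Delta> ^ 4 / c ^ 9) * (real n / (log 2 (real n)) ^ 2))"
proof (intro exI[of _ "1/128"] conjI allI impI)
  fix c \<Delta> :: real and n d :: nat and V :: "real mat"
  assume "c > 4" "\<Delta> > 0" "n \<ge> 2" "V \<in> carrier_mat d n"
    and "measure_pmf.expectation (graph_pmf V)
           (\<lambda>E. real (card (triangles_in E (low_degree_set V c)))) \<ge> \<Delta> * real n"
  then have "\<Delta> \<le> 2 * c\<^sup>2 \<and> \<Delta>\<^sup>2 * n \<le> 32 * c ^ 5 * vec_space.rank d V"
    by (intro low_degree_triangles_rank_bound) auto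
  with \<open>c > 4\<close> \<open>\<Delta> > 0\<close> \<open>n \<ge> 2\<close>
  show "1/128 * (\<Delta> ^ 4 / c ^ 9) * (real n / (log 2 (real n)) ^ 2) \<le> real (vec_space.rank d V)"
    by (intro rank_bound_weakening) auto
qed simp

end
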